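(* Let $k$ be a field, $A,B$ abelian groups, $R$ an $A$-graded and $S$ a $B$-graded finite-dimensional Frobenius $k$-algebra with forms $\langle-,-\rangle_R,\langle-,-\rangle_S$ and Nakayama automorphisms $\nu_R,\nu_S$, and $t:A\otimes B\to k^\times$ a bicharacter. Suppose there exist $\sigma_R\in A$, $\sigma_S\in B$ such that for homogeneous $r,r'\in R$, $\langle r,r'\rangle_R\neq0$ implies $|r|+|r'|+\sigma_R=0$, and for homogeneous $s,s'\in S$, $\langle s,s'\rangle_S\ne0$ implies $|s|+|s'|+\sigma_S=0$. Let $\nu$ be the Nakayama automorphism of $R\otimes^tS$ with respect to the form $\langle r\otimes s,r'\otimes s'\rangle=t(|r'|,|s|)\langle r,r'\rangle_R\langle s,s'\rangle_S$. Then for homogeneous $a\in R$, $b\in S$, $$\nu(a\otimes b)=t(|a|,\sigma_S)\,t(\sigma_R,|b|)^{-1}\,\nu_R(a)\otimes\nu_S(b).$$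
   Context: $R\otimes^tS$ is $R\otimes S$ with product $(r\otimes s)(r'\otimes s')=t(|r'|,|s|)rr'\otimes ss'$; $|\cdot|$ denotes degree. The Nakayama automorphism $\nu$ of a Frobenius algebra with form $\langle-,-\rangle$ is defined by $\langle x,y\rangle=\langle y,\nu(x)\rangle$ for all $y$. *)

theory Defs
  imports Main "HOL.Vector_Spaces"
begin

definition k_algebra :: "('k::field \<Rightarrow> 'r::ring_1 \<Rightarrow> 'r) \<Rightarrow> bool" where
  "k_algebra sc \<longleftrightarrow> vector_space sc \<and>
     (\<forall>c x y. sc c (x * y) = sc c x * y \<and> sc c (x * y) = x * sc c y)"

definition fin_dim :: "('k::field \<Rightarrow> 'r::ab_group_add \<Rightarrow> 'r) \<Rightarrow> bool" where
  "fin_dim sc \<longleftrightarrow> (\<exists>B. finite_dimensional_vector_space sc B)"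

definition bilinear_map ::
  "('k::field \<Rightarrow> 'u::ab_group_add \<Rightarrow> 'u) \<Rightarrow> ('k \<Rightarrow> 'v::ab_group_add \<Rightarrow> 'v)
   \<Rightarrow> ('k \<Rightarrow> 'w::ab_group_add \<Rightarrow> 'w) \<Rightarrow> ('u \<Rightarrow> 'v \<Rightarrow> 'w) \<Rightarrow> bool" where
  "bilinear_map s1 s2 s3 f \<longleftrightarrow>
     (\<forall>x. Vector_Spaces.linear s2 s3 (f x)) \<and> (\<forall>y. Vector_Spaces.linear s1 s3 (\<lambda>x. f x y))"

definition frobenius_form :: "('k::field \<Rightarrow> 'r::ring_1 \<Rightarrow> 'r) \<Rightarrow> ('r \<Rightarrow> 'r \<Rightarrow> 'k) \<Rightarrow> bool" where
  "frobenius_form sc form \<longleftrightarrow>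
     bilinear_map sc sc (*) form \<and>
     (\<forall>x y z. form (x * y) z = form x (y * z)) \<and>
     (\<forall>x. (\<forall>y. form x y = 0) \<longrightarrow> x = 0) \<and>
     (\<forall>y. (\<forall>x. form x y = 0) \<longrightarrow> y = 0)"

definition frobenius_algebra :: "('k::field \<Rightarrow> 'r::ring_1 \<Rightarrow> 'r) \<Rightarrow> ('r \<Rightarrow> 'r \<Rightarrow> 'k) \<Rightarrow> bool" where
  "frobenius_algebra sc form \<longleftrightarrow> k_algebra sc \<and> fin_dim sc \<and> frobenius_form sc form"

definition nakayama :: "('r \<Rightarrow> 'r \<Rightarrow> 'k) \<Rightarrow> 'r \<Rightarrow> 'r" where
  "nakayama form x = (THE z. \<forall>y. form x y = form y z)"

text \<open>An A-grading of an algebra: a family of subspaces, multiplicative, with 1 in degree 0,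
  whose (internal) direct sum is the whole algebra.  "x \<in> G a" means x is homogeneous of degree a.\<close>
definition graded :: "('k::field \<Rightarrow> 'r::ring_1 \<Rightarrow> 'r) \<Rightarrow> ('a::ab_group_add \<Rightarrow> 'r set) \<Rightarrow> bool" where
  "graded sc G \<longleftrightarrow>
     (\<forall>a. module.subspace sc (G a)) \<and>
     (\<forall>a b x y. x \<in> G a \<longrightarrow> y \<in> G b \<longrightarrow> x * y \<in> G (a + b)) \<and>
     1 \<in> G 0 \<and>
     (\<forall>x. \<exists>!f. finite {a. f a \<noteq> 0} \<and> (\<forall>a. f a \<in> G a) \<and> x = sum f {a. f a \<noteq> 0})"

definition bicharacter :: "('a::ab_group_add \<Rightarrow> 'b::ab_group_add \<Rightarrow> 'k::field) \<Rightarrow> bool" where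
  "bicharacter t \<longleftrightarrow> (\<forall>a b. t a b \<noteq> 0) \<and>
     (\<forall>a a' b. t (a + a') b = t a b * t a' b) \<and>
     (\<forall>a b b'. t a (b + b') = t a b * t a b')"

definition is_tensor_product ::
  "('k::field \<Rightarrow> 'r::ab_group_add \<Rightarrow> 'r) \<Rightarrow> ('k \<Rightarrow> 's::ab_group_add \<Rightarrow> 's)
   \<Rightarrow> ('k \<Rightarrow> 't::ab_group_add \<Rightarrow> 't) \<Rightarrow> ('r \<Rightarrow> 's \<Rightarrow> 't) \<Rightarrow> bool" where
  "is_tensor_product scR scS scT tp \<longleftrightarrow>
     vector_space scT \<and> bilinear_map scR scS scT tp \<and>
     (\<exists>BR BS. \<not> module.dependent scR BR \<and> module.span scR BR = UNIV \<and>
              \<not> module.dependent scS BS \<and> module.span scS BS = UNIV \<and>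
              inj_on (\<lambda>(r, s). tp r s) (BR \<times> BS) \<and>
              \<not> module.dependent scT ((\<lambda>(r, s). tp r s) ` (BR \<times> BS)) \<and>
              module.span scT ((\<lambda>(r, s). tp r s) ` (BR \<times> BS)) = UNIV)"

definition is_twisted_tensor ::
  "('k::field \<Rightarrow> 'r::ring_1 \<Rightarrow> 'r) \<Rightarrow> ('a::ab_group_add \<Rightarrow> 'r set)
   \<Rightarrow> ('k \<Rightarrow> 's::ring_1 \<Rightarrow> 's) \<Rightarrow> ('b::ab_group_add \<Rightarrow> 's set)
   \<Rightarrow> ('a \<Rightarrow> 'b \<Rightarrow> 'k) \<Rightarrow> ('k \<Rightarrow> 't::ring_1 \<Rightarrow> 't) \<Rightarrow> ('r \<Rightarrow> 's \<Rightarrow> 't) \<Rightarrow> bool" where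
  "is_twisted_tensor scR GR scS GS t scT tp \<longleftrightarrow>
     k_algebra scT \<and> is_tensor_product scR scS scT tp \<and>
     (\<forall>a b r s r' s'. r' \<in> GR a \<longrightarrow> s \<in> GS b \<longrightarrow>
        tp r s * tp r' s' = scT (t a b) (tp (r * r') (s * s')))"

end

theory Submission imports Defs begin

text \<open>
  If the pairing of a \<otimes> b with a homogeneous pure tensor r \<otimes> s is nonzero, the degree
  hypotheses force |r| = -|a| - sigma_R and |s| = -|b| - sigma_S. Hence both
  <a \<otimes> b, r \<otimes> s> and <r \<otimes> s, nu_R a \<otimes> nu_S b> are <a, r>_R <b, s>_S times a value of t,
  and the two values differ exactly by the factor t(|a|, sigma_S) / t(sigma_R, |b|).
  Homogeneous pure tensors span R \<otimes> S, and testing against them together with a basis of S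
  shows that the form on R \<otimes> S is nondegenerate in its second argument, so the claimed element
  is the unique one representing <a \<otimes> b, ->.
\<close>

lemma module_hom_eq_on_spanI:
  assumes "module_hom s1 s2 f" "module_hom s1 s2 g"
    and "\<And>x. x \<in> B \<Longrightarrow> f x = g x" "x \<in> module.span s1 B"
  shows "f x = g x"
  using module_pair.module_hom_eq_on_span[OF _ assms] assms(1)
  by (simp add: module_hom_def module_pair_def)

lemma bilinear_mapD:
  assumes "bilinear_map s1 s2 s3 f"
  shows bilinear_map_linear_right: "module_hom s2 s3 (f x)"
    and bilinear_map_linear_left: "module_hom s1 s3 (\<lambda>x. f x y)"
  using assms by (simp_all add: bilinear_map_def module_hom_iff_linear)

lemma frobenius_algebraD:
  assumes "frobenius_algebra sc form"
  shows frobenius_vector_space: "vector_space sc"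
    and frobenius_form_bilinear: "bilinear_map sc sc (*) form"
    and frobenius_form_right_nondegenerate: "\<And>y. (\<And>x. form x y = 0) \<Longrightarrow> y = 0"
    and frobenius_finite_dimensional: "\<exists>B. finite_dimensional_vector_space sc B"
  using assms
  unfolding frobenius_algebra_def k_algebra_def fin_dim_def frobenius_form_def by blast+

lemma nondegenerate_form_represents_functional:
  fixes sc :: "'k::field \<Rightarrow> 'v::ab_group_add \<Rightarrow> 'v"
  assumes fd: "finite_dimensional_vector_space sc B"
    and form: "bilinear_map sc sc (*) form"
    and nondeg: "\<And>z. (\<And>y. form y z = 0) \<Longrightarrow> z = 0"
    and \<phi>: "module_hom sc (*) \<phi>"
  shows "\<exists>z. \<forall>y. \<phi> y = form y z"
proof -
  interpret V: finite_dimensional_vector_space sc B by fact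
  note form_left = bilinear_map_linear_left[OF form]
    and form_right = bilinear_map_linear_right[OF form]
  have eq_on_V: "f y = g y"
    if "module_hom sc (*) f" "module_hom sc (*) g" "\<And>i. i \<in> B \<Longrightarrow> f i = g i" for f g y
    using module_hom_eq_on_spanI[OF that] V.span_Basis by blast
  have coords_zero: "\<forall>i\<in>B. u i = 0" if "(\<Sum>i\<in>B. sc (u i) i) = 0" for u
    using that V.independent_explicit V.independent_Basis by blast
  define coords where "coords z = (\<Sum>i\<in>B. sc (form i z) i)" for z
  have "module_hom sc sc coords"
    unfolding coords_def module_hom_iff
    by (simp add: V.module_axioms module_hom.add[OF form_right] module_hom.scale[OF form_right]
        V.scale_left_distrib sum.distrib V.scale_sum_right)
  then have coords_linear: "Vector_Spaces.linear sc sc coords"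
    by (simp add: module_hom_iff_linear)
  have form_zero_on_V: "form y z = 0" if "\<forall>i\<in>B. form i z = 0" for y z
    using eq_on_V[OF form_left, of "\<lambda>_. 0"] that form_right[of y]
    by (simp add: V.module_axioms module_hom_iff)
  have "inj coords"
  proof (rule injI)
    fix z z' assume "coords z = coords z'"
    then have "(\<Sum>i\<in>B. sc (form i (z - z')) i) = 0"
      by (simp add: coords_def module_hom.diff[OF form_right] V.scale_left_diff_distrib sum_subtractf)
    then have "form y (z - z') = 0" for y
      by (intro form_zero_on_V coords_zero)
    then show "z = z'" using nondeg[of "z - z'"] by simp
  qed
  then have "surj coords"
    by (rule V.linear_inj_imp_surj[OF coords_linear])
  then obtain z where z: "coords z = (\<Sum>i\<in>B. sc (\<phi> i) i)"
    by (metis surjD)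
  then have "(\<Sum>i\<in>B. sc (form i z - \<phi> i) i) = 0"
    by (simp add: coords_def V.scale_left_diff_distrib sum_subtractf)
  then have "\<forall>i\<in>B. form i z - \<phi> i = 0"
    by (rule coords_zero)
  then have "\<phi> y = form y z" for y
    using eq_on_V[OF \<phi> form_left[of z]] by simp
  then show ?thesis by blast
qed

lemma nakayama_eqI:
  assumes form_right: "\<And>y. module_hom sc (*) (form y)"
    and nondeg: "\<And>z. (\<And>y. form y z = 0) \<Longrightarrow> z = 0"
    and z: "\<And>y. form x y = form y z"
  shows "nakayama form x = z"
  unfolding nakayama_def
proof (rule the_equality)
  fix z' assume "\<forall>y. form x y = form y z'"
  then have "form y (z' - z) = 0" for y
    using z by (simp add: module_hom.diff[OF form_right])
  then show "z' = z" using nondeg[of "z' - z"] by simp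
qed (use z in blast)

lemma frobenius_form_nakayama:
  assumes "frobenius_algebra sc form"
  shows "form x y = form y (nakayama form x)"
proof -
  note form = frobenius_form_bilinear[OF assms]
  obtain B where "finite_dimensional_vector_space sc B"
    using frobenius_finite_dimensional[OF assms] by blast
  then obtain z where z: "\<forall>y. form x y = form y z"
    using nondegenerate_form_represents_functional[OF _ form frobenius_form_right_nondegenerate[OF assms]
        bilinear_map_linear_right[OF form]]
    by blast
  have "nakayama form x = z"
    using nakayama_eqI[where form = form, OF bilinear_map_linear_right[OF form]
          frobenius_form_right_nondegenerate[OF assms]] z
    by simp
  with z show ?thesis by simp
qed

lemma graded_decomposition:
  assumes "graded sc G"
  obtains g D where "finite D" "\<And>d. g d \<in> G d" "x = sum g D"
  using assms unfolding graded_def by metis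

lemma graded_linear_eqI:
  assumes "graded sc G" and f: "module_hom sc s f" and g: "module_hom sc s g"
    and eq: "\<And>d x. x \<in> G d \<Longrightarrow> f x = g x"
  shows "f x = g x"
proof -
  obtain h D where h: "\<And>d. h d \<in> G d" and x: "x = sum h D"
    using graded_decomposition[OF assms(1)] by metis
  have "(\<Sum>d\<in>D. f (h d)) = (\<Sum>d\<in>D. g (h d))"
    using eq[OF h] by simp
  then show ?thesis
    unfolding x module_hom.sum[OF f] module_hom.sum[OF g] .
qed

lemma graded_linear_eq_0I:
  assumes "graded sc G" and f: "module_hom sc s f"
    and "\<And>d x. x \<in> G d \<Longrightarrow> f x = 0"
  shows "f x = 0"
proof -
  interpret module_hom sc s f by fact
  have "module_hom sc s (\<lambda>_. 0)"
    by (simp add: module_hom_iff m1.module_axioms m2.module_axioms)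
  then show ?thesis by (rule graded_linear_eqI[OF assms(1) f]) (rule assms(3))
qed

lemma add_eq_0_imp_eq_diff:
  fixes x y z :: "'a::ab_group_add"
  shows "x + y + z = 0 \<Longrightarrow> y = - x - z"
  by (simp add: eq_diff_eq eq_neg_iff_add_eq_0 ac_simps)

lemma bicharacterD:
  assumes "bicharacter t"
  shows bicharacter_nonzero: "t a b \<noteq> 0"
    and bicharacter_add_left: "t (a + a') b = t a b * t a' b"
    and bicharacter_add_right: "t a (b + b') = t a b * t a b'"
  using assms unfolding bicharacter_def by simp_all

lemma bicharacter_minus_left:
  assumes "bicharacter t"
  shows "t (- a) b = inverse (t a b)"
proof -
  have "t 0 b = 1"
    using bicharacter_add_left[OF assms, of 0 0 b] bicharacter_nonzero[OF assms, of 0 b] by simp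
  then have "t (- a) b * t a b = 1"
    using bicharacter_add_left[OF assms, of "- a" a b] by simp
  then show ?thesis by (metis inverse_unique mult.commute)
qed

lemma bicharacter_minus_right:
  assumes "bicharacter t"
  shows "t a (- b) = inverse (t a b)"
proof -
  have "t a 0 = 1"
    using bicharacter_add_right[OF assms, of a 0 0] bicharacter_nonzero[OF assms, of a 0] by simp
  then have "t a (- b) * t a b = 1"
    using bicharacter_add_right[OF assms, of a "- b" b] by simp
  then show ?thesis by (metis inverse_unique mult.commute)
qed

lemma bicharacter_twist:
  assumes "bicharacter t"
  shows "t (- a - \<sigma>) b = t a \<tau> * inverse (t \<sigma> b) * t a (- b - \<tau>)"
proof -
  have "t (- a - \<sigma>) b = inverse (t a b) * inverse (t \<sigma> b)"
    by (simp only: diff_conv_add_uminus bicharacter_add_left[OF assms] bicharacter_minus_left[OF assms])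
  moreover have "t a (- b - \<tau>) = inverse (t a b) * inverse (t a \<tau>)"
    by (simp only: diff_conv_add_uminus bicharacter_add_right[OF assms] bicharacter_minus_right[OF assms])
  ultimately show ?thesis
    using bicharacter_nonzero[OF assms, of a \<tau>] by (simp add: field_simps)
qed

lemma span_pure_tensors_sum:
  assumes tp_left: "\<And>q. module_hom s1 s3 (\<lambda>p. tp p q)"
    and "w \<in> module.span s3 ((\<lambda>(p, q). tp p q) ` (P \<times> Q))"
  shows "\<exists>Q' x. finite Q' \<and> Q' \<subseteq> Q \<and> w = (\<Sum>q\<in>Q'. tp (x q) q)"
proof -
  interpret module s3
    using tp_left by (simp add: module_hom_def)
  from assms(2) show ?thesis
  proof (induction rule: span_induct_alt)
    case base
    show ?case by (rule exI[of _ "{}"]) simp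
  next
    case (step c v u)
    from step.hyps(1) obtain p q where v: "v = tp p q" and q: "q \<in> Q" by auto
    from step.IH obtain Q' x where Q': "finite Q'" "Q' \<subseteq> Q" and u: "u = (\<Sum>q\<in>Q'. tp (x q) q)"
      by blast
    define x' where "x' = x(q := (if q \<in> Q' then x q else 0) + s1 c p)"
    have x': "tp (x' q') q' = (if q' \<in> Q' then tp (x q') q' else 0) + (if q' = q then s3 c v else 0)"
      if "q' \<in> insert q Q'" for q'
      using that
      by (cases "q' = q") (simp_all add: x'_def v module_hom.add[OF tp_left] module_hom.scale[OF tp_left]
          module_hom.zero[OF tp_left])
    have "(\<Sum>q'\<in>insert q Q'. tp (x' q') q') =
        (\<Sum>q'\<in>insert q Q'. (if q' \<in> Q' then tp (x q') q' else 0) + (if q' = q then s3 c v else 0))"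
      by (simp only: x' cong: sum.cong)
    also have "\<dots> = u + s3 c v"
      using sum.inter_restrict[of "insert q Q'" "\<lambda>q'. tp (x q') q'" Q'] Q'(1)
      by (simp only: sum.distrib sum.delta finite_insert insert_iff simp_thms if_True
          Int_absorb1 subset_insertI u)
    finally have "s3 c v + u = (\<Sum>q'\<in>insert q Q'. tp (x' q') q')"
      by (simp add: add.commute)
    moreover have "finite (insert q Q')" "insert q Q' \<subseteq> Q"
      using Q' q by auto
    ultimately show ?case
      by (intro exI[of _ "insert q Q'"] exI[of _ x'] conjI)
  qed
qed

locale twisted_tensor_frobenius =
  fixes scR :: "'k::field \<Rightarrow> 'r::ring_1 \<Rightarrow> 'r"
    and scS :: "'k \<Rightarrow> 's::ring_1 \<Rightarrow> 's"
    and scT :: "'k \<Rightarrow> 't::ab_group_add \<Rightarrow> 't"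
    and GR :: "'a::ab_group_add \<Rightarrow> 'r set"
    and GS :: "'b::ab_group_add \<Rightarrow> 's set"
    and formR :: "'r \<Rightarrow> 'r \<Rightarrow> 'k"
    and formS :: "'s \<Rightarrow> 's \<Rightarrow> 'k"
    and formT :: "'t \<Rightarrow> 't \<Rightarrow> 'k"
    and t :: "'a \<Rightarrow> 'b \<Rightarrow> 'k"
    and tp :: "'r \<Rightarrow> 's \<Rightarrow> 't"
    and sigmaR :: 'a and sigmaS :: 'b
  assumes R_frob: "frobenius_algebra scR formR" and R_graded: "graded scR GR"
    and S_frob: "frobenius_algebra scS formS" and S_graded: "graded scS GS"
    and t_bichar: "bicharacter t"
    and R_form_degree: "\<And>d d' r r'. r \<in> GR d \<Longrightarrow> r' \<in> GR d' \<Longrightarrow> formR r r' \<noteq> 0 \<Longrightarrow> d + d' + sigmaR = 0"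
    and S_form_degree: "\<And>d d' s s'. s \<in> GS d \<Longrightarrow> s' \<in> GS d' \<Longrightarrow> formS s s' \<noteq> 0 \<Longrightarrow> d + d' + sigmaS = 0"
    and tensor: "is_tensor_product scR scS scT tp"
    and formT_bilinear: "bilinear_map scT scT (*) formT"
    and formT_pure: "\<And>r s r' s' d e. r' \<in> GR d \<Longrightarrow> s \<in> GS e \<Longrightarrow>
      formT (tp r s) (tp r' s') = t d e * formR r r' * formS s s'"
begin

lemma tp_linear_left: "module_hom scR scT (\<lambda>r. tp r s)"
  and tp_linear_right: "module_hom scS scT (tp r)"
  using tensor unfolding is_tensor_product_def
  by (blast intro: bilinear_map_linear_left bilinear_map_linear_right)+

lemma tensor_basis_span: "\<exists>BR BS. \<not> module.dependent scS BS \<and>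
    module.span scT ((\<lambda>(r, s). tp r s) ` (BR \<times> BS)) = UNIV"
  using tensor unfolding is_tensor_product_def by blast

lemmas formT_linear_left = bilinear_map_linear_left[OF formT_bilinear]
  and formT_linear_right = bilinear_map_linear_right[OF formT_bilinear]
  and formR_linear_left = bilinear_map_linear_left[OF frobenius_form_bilinear[OF R_frob]]
  and formR_linear_right = bilinear_map_linear_right[OF frobenius_form_bilinear[OF R_frob]]
  and formS_linear_left = bilinear_map_linear_left[OF frobenius_form_bilinear[OF S_frob]]
  and formS_linear_right = bilinear_map_linear_right[OF frobenius_form_bilinear[OF S_frob]]

lemma formT_pure_homogeneous:
  assumes r: "r \<in> GR d" and s: "s \<in> GS e"
  shows "formT (tp r s) (tp x y) = t (- d - sigmaR) e * formR r x * formS s y"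
proof (rule graded_linear_eqI[OF R_graded,
      where f = "\<lambda>x. formT (tp r s) (tp x y)" and g = "\<lambda>x. t (- d - sigmaR) e * formR r x * formS s y"])
  show "module_hom scR (*) (\<lambda>x. formT (tp r s) (tp x y))"
    using module_hom_compose[OF tp_linear_left formT_linear_right] by (simp add: comp_def)
  show "module_hom scR (*) (\<lambda>x. t (- d - sigmaR) e * formR r x * formS s y)"
    using formR_linear_right[of r] by (simp add: module_hom_iff algebra_simps)
next
  fix d' x assume x: "x \<in> GR d'"
  show "formT (tp r s) (tp x y) = t (- d - sigmaR) e * formR r x * formS s y"
  proof (cases "formR r x = 0")
    case False
    then have "d' = - d - sigmaR"
      using R_form_degree[OF r x] add_eq_0_imp_eq_diff by blast
    then show ?thesis using formT_pure[OF x s] by simp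
  qed (simp add: formT_pure[OF x s])
qed

lemma functional_eq_on_homogeneous_pure_tensors:
  assumes \<phi>: "module_hom scT (*) \<phi>" and \<psi>: "module_hom scT (*) \<psi>"
    and eq: "\<And>r s d e. r \<in> GR d \<Longrightarrow> s \<in> GS e \<Longrightarrow> \<phi> (tp r s) = \<psi> (tp r s)"
  shows "\<phi> w = \<psi> w"
proof -
  have pure: "\<phi> (tp p q) = \<psi> (tp p q)" for p q
  proof (rule graded_linear_eqI[OF R_graded, where f = "\<lambda>p. \<phi> (tp p q)" and g = "\<lambda>p. \<psi> (tp p q)"])
    show "module_hom scR (*) (\<lambda>p. \<phi> (tp p q))" "module_hom scR (*) (\<lambda>p. \<psi> (tp p q))"
      using module_hom_compose[OF tp_linear_left \<phi>] module_hom_compose[OF tp_linear_left \<psi>]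
      by (simp_all add: comp_def)
  next
    fix d r assume r: "r \<in> GR d"
    show "\<phi> (tp r q) = \<psi> (tp r q)"
    proof (rule graded_linear_eqI[OF S_graded, where f = "\<lambda>q. \<phi> (tp r q)" and g = "\<lambda>q. \<psi> (tp r q)"])
      show "module_hom scS (*) (\<lambda>q. \<phi> (tp r q))" "module_hom scS (*) (\<lambda>q. \<psi> (tp r q))"
        using module_hom_compose[OF tp_linear_right \<phi>] module_hom_compose[OF tp_linear_right \<psi>]
        by (simp_all add: comp_def)
    qed (rule eq[OF r])
  qed
  obtain BR BS where "module.span scT ((\<lambda>(r, s). tp r s) ` (BR \<times> BS)) = UNIV"
    using tensor_basis_span by blast
  then have "w \<in> module.span scT ((\<lambda>(r, s). tp r s) ` (BR \<times> BS))"
    by simp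
  then show ?thesis
    by (rule module_hom_eq_on_spanI[OF \<phi> \<psi>, rotated]) (auto simp: pure)
qed

lemma right_radical_contraction_eq_0:
  assumes w: "\<And>y. formT y (\<Sum>q\<in>Q. tp (x q) q) = 0" and r: "r \<in> GR d"
  shows "(\<Sum>q\<in>Q. scS (formR r (x q)) q) = 0" (is "?v = 0")
proof (rule frobenius_form_right_nondegenerate[OF S_frob])
  fix s
  show "formS s ?v = 0"
  proof (rule graded_linear_eq_0I[OF S_graded formS_linear_left])
    fix e s assume s: "s \<in> GS e"
    have "0 = formT (tp r s) (\<Sum>q\<in>Q. tp (x q) q)"
      using w by simp
    also have "\<dots> = (\<Sum>q\<in>Q. t (- d - sigmaR) e * formR r (x q) * formS s q)"
      unfolding module_hom.sum[OF formT_linear_right] formT_pure_homogeneous[OF r s] ..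
    also have "\<dots> = t (- d - sigmaR) e * formS s ?v"
      unfolding module_hom.sum[OF formS_linear_right] module_hom.scale[OF formS_linear_right]
      by (simp add: sum_distrib_left mult.assoc)
    finally show "formS s ?v = 0"
      using bicharacter_nonzero[OF t_bichar] by simp
  qed
qed

lemma formT_right_nondegenerate:
  assumes w: "\<And>y. formT y w = 0"
  shows "w = 0"
proof -
  interpret S: vector_space scS
    by (rule frobenius_vector_space[OF S_frob])
  obtain BR BS where BS: "\<not> S.dependent BS"
    and span: "module.span scT ((\<lambda>(r, s). tp r s) ` (BR \<times> BS)) = UNIV"
    using tensor_basis_span by blast
  from span have "w \<in> module.span scT ((\<lambda>(r, s). tp r s) ` (BR \<times> BS))"
    by simp
  then have "\<exists>Q x. finite Q \<and> Q \<subseteq> BS \<and> w = (\<Sum>q\<in>Q. tp (x q) q)"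
    by (rule span_pure_tensors_sum[OF tp_linear_left])
  then obtain Q x where Q: "finite Q" "Q \<subseteq> BS" and w_sum: "w = (\<Sum>q\<in>Q. tp (x q) q)"
    by blast
  have Q_indep: "\<forall>c. (\<Sum>q\<in>Q. scS (c q) q) = 0 \<longrightarrow> (\<forall>q\<in>Q. c q = 0)"
    using S.dependent_finite[OF Q(1)] S.dependent_mono[OF _ Q(2)] BS by blast
  have "x q = 0" if q: "q \<in> Q" for q
  proof (rule frobenius_form_right_nondegenerate[OF R_frob])
    fix r'
    show "formR r' (x q) = 0"
    proof (rule graded_linear_eq_0I[OF R_graded formR_linear_left])
      fix d r assume "r \<in> GR d"
      then have "(\<Sum>q\<in>Q. scS (formR r (x q)) q) = 0"
        using right_radical_contraction_eq_0 w unfolding w_sum by blast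
      then show "formR r (x q) = 0"
        using Q_indep[rule_format, of "\<lambda>q. formR r (x q)"] q by blast
    qed
  qed
  then show "w = 0"
    unfolding w_sum by (simp add: module_hom.zero[OF tp_linear_left])
qed

lemma formT_pure_nakayama_homogeneous:
  assumes a: "a \<in> GR \<alpha>" and b: "b \<in> GS \<beta>" and r: "r \<in> GR d" and s: "s \<in> GS e"
  shows "formT (tp a b) (tp r s) =
    formT (tp r s) (scT (t \<alpha> sigmaS * inverse (t sigmaR \<beta>)) (tp (nakayama formR a) (nakayama formS b)))"
proof -
  define c where "c = t \<alpha> sigmaS * inverse (t sigmaR \<beta>)"
  have lhs: "formT (tp a b) (tp r s) = t (- \<alpha> - sigmaR) \<beta> * formR a r * formS b s"
    by (rule formT_pure_homogeneous[OF a b])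
  have "formT (tp r s) (scT c (tp (nakayama formR a) (nakayama formS b))) =
      c * (t (- d - sigmaR) e * formR r (nakayama formR a) * formS s (nakayama formS b))"
    by (simp only: module_hom.scale[OF formT_linear_right] formT_pure_homogeneous[OF r s])
  also have "\<dots> = c * t (- d - sigmaR) e * formR a r * formS b s"
    by (simp only: frobenius_form_nakayama[OF R_frob, of a r, symmetric]
        frobenius_form_nakayama[OF S_frob, of b s, symmetric] mult.assoc)
  finally have rhs: "formT (tp r s) (scT c (tp (nakayama formR a) (nakayama formS b))) =
      c * t (- d - sigmaR) e * formR a r * formS b s" .
  show ?thesis
  proof (cases "formR a r = 0 \<or> formS b s = 0")
    case True
    then show ?thesis unfolding c_def[symmetric] lhs rhs by auto
  next
    case False
    then have "d = - \<alpha> - sigmaR" "e = - \<beta> - sigmaS"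
      using R_form_degree[OF a r] S_form_degree[OF b s] by (blast intro: add_eq_0_imp_eq_diff)+
    then have "t (- \<alpha> - sigmaR) \<beta> = c * t (- d - sigmaR) e"
      by (simp add: c_def bicharacter_twist[OF t_bichar, of \<alpha> sigmaR \<beta> sigmaS])
    then show ?thesis unfolding c_def[symmetric] lhs rhs by simp
  qed
qed

theorem nakayama_pure_tensor:
  assumes a: "a \<in> GR \<alpha>" and b: "b \<in> GS \<beta>"
  shows "nakayama formT (tp a b) =
    scT (t \<alpha> sigmaS * inverse (t sigmaR \<beta>)) (tp (nakayama formR a) (nakayama formS b))"
proof (rule nakayama_eqI[where form = formT, OF formT_linear_right formT_right_nondegenerate])
  fix y
  show "formT (tp a b) y =
    formT y (scT (t \<alpha> sigmaS * inverse (t sigmaR \<beta>)) (tp (nakayama formR a) (nakayama formS b)))"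
    by (rule functional_eq_on_homogeneous_pure_tensors[OF formT_linear_right formT_linear_left])
      (rule formT_pure_nakayama_homogeneous[OF a b])
qed

end

theorem mainTheorem6:
  fixes scR :: "'k::field \<Rightarrow> 'r::ring_1 \<Rightarrow> 'r"
    and scS :: "'k \<Rightarrow> 's::ring_1 \<Rightarrow> 's"
    and scT :: "'k \<Rightarrow> 't::ring_1 \<Rightarrow> 't"
    and GR :: "'a::ab_group_add \<Rightarrow> 'r set"
    and GS :: "'b::ab_group_add \<Rightarrow> 's set"
    and formR :: "'r \<Rightarrow> 'r \<Rightarrow> 'k"
    and formS :: "'s \<Rightarrow> 's \<Rightarrow> 'k"
    and formT :: "'t \<Rightarrow> 't \<Rightarrow> 'k"
    and t :: "'a \<Rightarrow> 'b \<Rightarrow> 'k"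
    and tp :: "'r \<Rightarrow> 's \<Rightarrow> 't"
    and sigmaR :: 'a and sigmaS :: 'b
    and a :: 'r and b :: 's and \<alpha> :: 'a and \<beta> :: 'b
  assumes R_frob: "frobenius_algebra scR formR" and R_graded: "graded scR GR"
    and S_frob: "frobenius_algebra scS formS" and S_graded: "graded scS GS"
    and t_bichar: "bicharacter t"
    and sigmaR: "\<forall>d d' r r'. r \<in> GR d \<longrightarrow> r' \<in> GR d' \<longrightarrow> formR r r' \<noteq> 0 \<longrightarrow> d + d' + sigmaR = 0"
    and sigmaS: "\<forall>d d' s s'. s \<in> GS d \<longrightarrow> s' \<in> GS d' \<longrightarrow> formS s s' \<noteq> 0 \<longrightarrow> d + d' + sigmaS = 0"
    and T_tensor: "is_twisted_tensor scR GR scS GS t scT tp"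
    and formT_bilin: "bilinear_map scT scT (*) formT"
    and formT_def: "\<forall>r s r' s' d e. r' \<in> GR d \<longrightarrow> s \<in> GS e \<longrightarrow>
                      formT (tp r s) (tp r' s') = t d e * formR r r' * formS s s'"
    and a_hom: "a \<in> GR \<alpha>" and b_hom: "b \<in> GS \<beta>"
  shows "nakayama formT (tp a b) =
           scT (t \<alpha> sigmaS * inverse (t sigmaR \<beta>)) (tp (nakayama formR a) (nakayama formS b))"
proof -
  interpret twisted_tensor_frobenius scR scS scT GR GS formR formS formT t tp sigmaR sigmaS
    using R_frob R_graded S_frob S_graded t_bichar sigmaR sigmaS T_tensor formT_bilin formT_def
    by unfold_locales (auto simp: is_twisted_tensor_def)
  show ?thesis
    by (rule nakayama_pure_tensor[OF a_hom b_hom])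
qed

end
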